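(* Consider the generalized nested logit (GNL) model with $K$ nests, nest parameters $0<\lambda_k\le1$ ($k=1,\dots,K$), and allocation parameters $\alpha_{ik}\ge0$ with $\sum_{k=1}^K\alpha_{ik}=1$ for every $i\in A$. Let $T\ge1$, let $u_1,\dots,u_T$ be arbitrary payoff vectors with $\|u_t\|_\infty\le u_{\max}$, and set $$\eta=\sqrt{\frac{\big(\tfrac{2}{\min_k\lambda_k}-1\big)T u_{\max}^2}{2\log N}}.$$ Then the regret of the GNL-SSA satisfies $$R^T_{SSA}\le u_{\max}\sqrt{2\log N\Big(\frac{2}{\min_k\lambda_k}-1\Big)T}.$$
   Context: $N\ge2$, $A=\{1,\dots,N\}$, $\Delta_N=\{x\in\mathbb{R}^N:x_i\ge0,\sum_ix_i=1\}$. The GNL generator is $G(y)=\sum_{k=1}^K\big(\sum_{i=1}^N(\alpha_{ik}y_i)^{1/\lambda_k}\big)^{\lambda_k}$ for $y\in\mathbb{R}^N_+$. Set $\theta_0=0$, $\theta_t=\sum_{s=1}^tu_s$, and $e^{\theta/\eta}=(e^{\theta_1/\eta},\dots,e^{\theta_N/\eta})$. The GNL-SSA chooses $x_t=\nabla\psi_\eta(\theta_{t-1})$, $t=1,\dots,T$, where $\psi_\eta(\theta)=\eta\log G(e^{\theta/\eta})$; equivalently $x_{t,j}=\sum_{k=1}^K P_{k}\,P_{j|k}$ with $P_k=e^{v_k}/\sum_{\ell}e^{v_\ell}$, $v_k=\lambda_k\log\sum_{i}(\alpha_{ik}e^{\theta_{i,t-1}/\eta})^{1/\lambda_k}$, and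 $P_{j|k}=(\alpha_{jk}e^{\theta_{j,t-1}/\eta})^{1/\lambda_k}/\sum_i(\alpha_{ik}e^{\theta_{i,t-1}/\eta})^{1/\lambda_k}$. The regret of a sequence $x_1,\dots,x_T\in\Delta_N$ is $R^T=\max_{x\in\Delta_N}\langle\theta_T,x\rangle-\sum_{t=1}^T\langle u_t,x_t\rangle$. *)

theory Defs
  imports Complex_Main
begin

text \<open>Vectors in R^N are represented as functions nat => real; only the
  coordinates 1..N are relevant. Nests are indexed by 1..K, rounds by 1..T.\<close>

definition simplex :: "nat \<Rightarrow> (nat \<Rightarrow> real) set" where
  "simplex N = {x. (\<forall>i\<in>{1..N}. 0 \<le> x i) \<and> (\<Sum>i=1..N. x i) = 1}"

definition cum_payoff :: "(nat \<Rightarrow> nat \<Rightarrow> real) \<Rightarrow> nat \<Rightarrow> nat \<Rightarrow> real" where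
  "cum_payoff u t i = (\<Sum>s=1..t. u s i)"

definition gnl_G :: "nat \<Rightarrow> nat \<Rightarrow> (nat \<Rightarrow> nat \<Rightarrow> real) \<Rightarrow> (nat \<Rightarrow> real)
    \<Rightarrow> (nat \<Rightarrow> real) \<Rightarrow> real" where
  "gnl_G N K \<alpha> lam y = (\<Sum>k=1..K. (\<Sum>i=1..N. (\<alpha> i k * y i) powr (1 / lam k)) powr lam k)"

definition nest_sum :: "nat \<Rightarrow> (nat \<Rightarrow> nat \<Rightarrow> real) \<Rightarrow> (nat \<Rightarrow> real) \<Rightarrow> real
    \<Rightarrow> (nat \<Rightarrow> real) \<Rightarrow> nat \<Rightarrow> real" where
  "nest_sum N \<alpha> lam \<eta> \<theta> k = (\<Sum>i=1..N. (\<alpha> i k * exp (\<theta> i / \<eta>)) powr (1 / lam k))"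

definition nest_prob :: "nat \<Rightarrow> nat \<Rightarrow> (nat \<Rightarrow> nat \<Rightarrow> real) \<Rightarrow> (nat \<Rightarrow> real) \<Rightarrow> real
    \<Rightarrow> (nat \<Rightarrow> real) \<Rightarrow> nat \<Rightarrow> real" where
  "nest_prob N K \<alpha> lam \<eta> \<theta> k =
     nest_sum N \<alpha> lam \<eta> \<theta> k powr lam k / (\<Sum>l=1..K. nest_sum N \<alpha> lam \<eta> \<theta> l powr lam l)"

definition cond_prob :: "nat \<Rightarrow> (nat \<Rightarrow> nat \<Rightarrow> real) \<Rightarrow> (nat \<Rightarrow> real) \<Rightarrow> real
    \<Rightarrow> (nat \<Rightarrow> real) \<Rightarrow> nat \<Rightarrow> nat \<Rightarrow> real" where
  "cond_prob N \<alpha> lam \<eta> \<theta> j k =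
     (\<alpha> j k * exp (\<theta> j / \<eta>)) powr (1 / lam k) / nest_sum N \<alpha> lam \<eta> \<theta> k"

text \<open>GNL choice probabilities  x_j = sum_k P_k P_{j|k}  (= grad psi_eta(theta)).\<close>
definition gnl_choice :: "nat \<Rightarrow> nat \<Rightarrow> (nat \<Rightarrow> nat \<Rightarrow> real) \<Rightarrow> (nat \<Rightarrow> real) \<Rightarrow> real
    \<Rightarrow> (nat \<Rightarrow> real) \<Rightarrow> nat \<Rightarrow> real" where
  "gnl_choice N K \<alpha> lam \<eta> \<theta> j =
     (\<Sum>k=1..K. nest_prob N K \<alpha> lam \<eta> \<theta> k * cond_prob N \<alpha> lam \<eta> \<theta> j k)"

definition gnl_ssa :: "nat \<Rightarrow> nat \<Rightarrow> (nat \<Rightarrow> nat \<Rightarrow> real) \<Rightarrow> (nat \<Rightarrow> real) \<Rightarrow> real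
    \<Rightarrow> (nat \<Rightarrow> nat \<Rightarrow> real) \<Rightarrow> nat \<Rightarrow> nat \<Rightarrow> real" where
  "gnl_ssa N K \<alpha> lam \<eta> u t = gnl_choice N K \<alpha> lam \<eta> (cum_payoff u (t - 1))"

definition regret :: "nat \<Rightarrow> nat \<Rightarrow> (nat \<Rightarrow> nat \<Rightarrow> real) \<Rightarrow> (nat \<Rightarrow> nat \<Rightarrow> real) \<Rightarrow> real" where
  "regret N T u x =
     (SUP y\<in>simplex N. (\<Sum>i=1..N. cum_payoff u T i * y i))
     - (\<Sum>t=1..T. \<Sum>i=1..N. u t i * x t i)"

end

theory Submission
  imports Defs
begin

(* The GNL-SSA plays the gradient of the potential psi(theta) = eta ln G(e^(theta/eta)), which
   dominates max_i theta_i and satisfies psi(0) <= eta ln N because G(y) <= sum_i y_i.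
   Along the segment s |-> theta + s w each nest contributes S_k(s)^lambda_k, whose second
   derivative is at most (B/eta)^2 / lambda_k times itself for |w_i| <= B, as lambda_k <= 1 makes
   the cross term nonpositive.  Hence s |-> ln G is (B/eta)^2 / lambda_min-smooth, and a second
   order Taylor bound gives
     psi(theta + w) <= psi(theta) + <w, grad psi(theta)> + B^2 / (2 eta lambda_min).
   Telescoping over the rounds bounds the regret by eta ln N + T B^2 / (2 eta lambda_min), and the
   given eta balances the two terms. *)

lemma taylor_second_order_le:
  fixes f f' f'' :: "real \<Rightarrow> real"
  assumes f': "\<And>x. (f has_real_derivative f' x) (at x)"
    and f'': "\<And>x. (f' has_real_derivative f'' x) (at x)"
    and bound: "\<And>x. f'' x \<le> M"
  shows "f x \<le> f 0 + f' 0 * x + M / 2 * x\<^sup>2"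
proof -
  define d where "d n = (if n = 0 then f else if n = 1 then f' else f'')" for n :: nat
  have "\<exists>t. \<bar>t\<bar> \<le> \<bar>x\<bar> \<and> f x = (\<Sum>m<2. d m 0 / fact m * x ^ m) + d 2 t / fact 2 * x ^ 2"
    by (rule Maclaurin_bi_le) (auto simp: d_def f' f'' less_2_cases_iff)
  then obtain t where "f x = f 0 + f' 0 * x + f'' t / 2 * x\<^sup>2"
    by (auto simp: d_def numeral_2_eq_2)
  then show ?thesis
    using mult_right_mono[OF bound[of t], of "x\<^sup>2 / 2"] by simp
qed

lemma ln_second_order_le:
  fixes G G' G'' :: "real \<Rightarrow> real"
  assumes pos: "\<And>x. 0 < G x"
    and G': "\<And>x. (G has_real_derivative G' x) (at x)"
    and G'': "\<And>x. (G' has_real_derivative G'' x) (at x)"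
    and bound: "\<And>x. G'' x \<le> M * G x"
  shows "ln (G x) \<le> ln (G 0) + G' 0 / G 0 * x + M / 2 * x\<^sup>2"
proof (rule taylor_second_order_le)
  show "((\<lambda>x. ln (G x)) has_real_derivative G' x / G x) (at x)" for x
    using G' pos by (auto intro!: derivative_eq_intros)
  show "((\<lambda>x. G' x / G x) has_real_derivative (G'' x * G x - G' x * G' x) / (G x)\<^sup>2) (at x)" for x
    using G' G'' pos[of x] by (auto intro!: derivative_eq_intros simp: power2_eq_square)
  show "(G'' x * G x - G' x * G' x) / (G x)\<^sup>2 \<le> M" for x
  proof -
    have "(G'' x * G x - G' x * G' x) / (G x)\<^sup>2 \<le> G'' x * G x / (G x)\<^sup>2"
      using pos[of x] by (intro divide_right_mono) auto
    also have "\<dots> = G'' x / G x"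
      using pos[of x] by (simp add: power2_eq_square)
    also have "\<dots> \<le> M"
      using bound[of x] pos[of x] by (simp add: divide_le_eq)
    finally show ?thesis .
  qed
qed

lemma exp_sum_powr_derivatives:
  fixes a v :: "'a \<Rightarrow> real" and l :: real
  assumes I: "finite I" and a: "\<And>i. i \<in> I \<Longrightarrow> 0 \<le> a i" and l: "0 < l"
  defines "S \<equiv> \<lambda>s. \<Sum>i\<in>I. a i * exp (s * v i / l)"
    and "T \<equiv> \<lambda>s. \<Sum>i\<in>I. a i * exp (s * v i / l) * v i"
    and "U \<equiv> \<lambda>s. \<Sum>i\<in>I. a i * exp (s * v i / l) * (v i)\<^sup>2"
  shows "((\<lambda>s. S s powr l) has_real_derivative S s powr (l - 1) * T s) (at s)"
    and "((\<lambda>s. S s powr (l - 1) * T s) has_real_derivative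
          ((l - 1) * S s powr (l - 2) * (T s)\<^sup>2 + S s powr (l - 1) * U s) / l) (at s)"
proof -
  have dS: "(S has_real_derivative T s / l) (at s)" for s
    unfolding S_def T_def sum_divide_distrib using l
    by (auto intro!: derivative_eq_intros DERIV_sum simp: field_simps)
  have dT: "(T has_real_derivative U s / l) (at s)" for s
    unfolding T_def U_def sum_divide_distrib using l
    by (auto intro!: derivative_eq_intros DERIV_sum simp: field_simps power2_eq_square)
  have S_pos: "0 < S s" if nonzero: "\<not> (\<forall>i\<in>I. a i = 0)" for s
  proof -
    obtain j where "j \<in> I" "0 < a j" using nonzero a by force
    then show ?thesis
      unfolding S_def using I a by (intro sum_pos2[of _ j]) auto
  qed
  \<comment> \<open>If all weights vanish, S is identically 0 and both claims hold by the convention 0 powr x = 0.\<close>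
  show "((\<lambda>s. S s powr l) has_real_derivative S s powr (l - 1) * T s) (at s)"
  proof (cases "\<forall>i\<in>I. a i = 0")
    case True
    then show ?thesis by (simp add: S_def T_def)
  next
    case False
    then show ?thesis
      using DERIV_fun_powr[OF dS S_pos, of l] l by simp
  qed
  show "((\<lambda>s. S s powr (l - 1) * T s) has_real_derivative
          ((l - 1) * S s powr (l - 2) * (T s)\<^sup>2 + S s powr (l - 1) * U s) / l) (at s)"
  proof (cases "\<forall>i\<in>I. a i = 0")
    case True
    then show ?thesis by (simp add: S_def T_def U_def)
  next
    case False
    show ?thesis
      using DERIV_mult[OF DERIV_fun_powr[OF dS S_pos[OF False], of "l - 1"] dT]
      by (rule DERIV_cong) (use l in \<open>simp add: field_simps power2_eq_square\<close>)
  qed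
qed

lemma exp_sum_powr_second_derivative_le:
  fixes a v :: "'a \<Rightarrow> real" and l b s :: real
  assumes a: "\<And>i. i \<in> I \<Longrightarrow> 0 \<le> a i" and l: "0 < l" "l \<le> 1"
    and v: "\<And>i. i \<in> I \<Longrightarrow> \<bar>v i\<bar> \<le> b"
  defines "S \<equiv> \<Sum>i\<in>I. a i * exp (s * v i / l)"
    and "T \<equiv> \<Sum>i\<in>I. a i * exp (s * v i / l) * v i"
    and "U \<equiv> \<Sum>i\<in>I. a i * exp (s * v i / l) * (v i)\<^sup>2"
  shows "((l - 1) * S powr (l - 2) * T\<^sup>2 + S powr (l - 1) * U) / l \<le> b\<^sup>2 / l * S powr l"
proof -
  have S_nonneg: "0 \<le> S"
    unfolding S_def using a by (intro sum_nonneg) auto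
  have U_le: "U \<le> b\<^sup>2 * S"
    unfolding U_def S_def sum_distrib_left
  proof (rule sum_mono)
    fix i assume i: "i \<in> I"
    have "(v i)\<^sup>2 \<le> b\<^sup>2"
      using v[OF i] by (metis abs_ge_zero power2_abs power_mono)
    moreover have "0 \<le> a i * exp (s * v i / l)"
      using a[OF i] by simp
    ultimately show "a i * exp (s * v i / l) * (v i)\<^sup>2 \<le> b\<^sup>2 * (a i * exp (s * v i / l))"
      by (metis mult.commute mult_left_mono)
  qed
  have "S powr (l - 1) * U \<le> b\<^sup>2 * (S powr (l - 1) * S)"
    using mult_left_mono[OF U_le powr_ge_zero[of S "l - 1"]] by (simp add: mult.left_commute)
  also have "S powr (l - 1) * S = S powr l"
    using powr_add[of S "l - 1" 1] S_nonneg by simp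
  finally have "S powr (l - 1) * U \<le> b\<^sup>2 * S powr l" .
  moreover have "(l - 1) * S powr (l - 2) * T\<^sup>2 \<le> 0"
    using l by (intro mult_nonpos_nonneg) auto
  ultimately show ?thesis
    using l by (simp add: divide_right_mono)
qed

lemma ln_sum_powr_exp_sum_le:
  fixes a :: "'k \<Rightarrow> 'i \<Rightarrow> real" and v :: "'i \<Rightarrow> real" and lam :: "'k \<Rightarrow> real" and l b :: real
  assumes I: "finite I"
    and a: "\<And>k i. k \<in> Ks \<Longrightarrow> i \<in> I \<Longrightarrow> 0 \<le> a k i"
    and lam: "\<And>k. k \<in> Ks \<Longrightarrow> l \<le> lam k \<and> lam k \<le> 1" and l: "0 < l"
    and v: "\<And>i. i \<in> I \<Longrightarrow> \<bar>v i\<bar> \<le> b"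
  defines "S \<equiv> \<lambda>k s. \<Sum>i\<in>I. a k i * exp (s * v i / lam k)"
  defines "G \<equiv> \<lambda>s. \<Sum>k\<in>Ks. S k s powr lam k"
  assumes G_pos: "\<And>s. 0 < G s"
  shows "ln (G 1) \<le> ln (G 0) + (\<Sum>k\<in>Ks. S k 0 powr (lam k - 1) * (\<Sum>i\<in>I. a k i * v i)) / G 0
    + b\<^sup>2 / (2 * l)"
proof -
  define T where "T k s = (\<Sum>i\<in>I. a k i * exp (s * v i / lam k) * v i)" for k s
  define U where "U k s = (\<Sum>i\<in>I. a k i * exp (s * v i / lam k) * (v i)\<^sup>2)" for k s
  define G' where "G' s = (\<Sum>k\<in>Ks. S k s powr (lam k - 1) * T k s)" for s
  define G'' where "G'' s = (\<Sum>k\<in>Ks.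
     ((lam k - 1) * S k s powr (lam k - 2) * (T k s)\<^sup>2 + S k s powr (lam k - 1) * U k s) / lam k)" for s
  have lam_pos: "0 < lam k" if "k \<in> Ks" for k
    using lam[OF that] l by linarith
  have "(G has_real_derivative G' s) (at s)" for s
    unfolding G_def G'_def S_def T_def using I a lam_pos
    by (intro DERIV_sum exp_sum_powr_derivatives(1)) auto
  moreover have "(G' has_real_derivative G'' s) (at s)" for s
    unfolding G'_def G''_def S_def T_def U_def using I a lam_pos
    by (intro DERIV_sum exp_sum_powr_derivatives(2)) auto
  moreover have "G'' s \<le> b\<^sup>2 / l * G s" for s
  proof -
    have "((lam k - 1) * S k s powr (lam k - 2) * (T k s)\<^sup>2 + S k s powr (lam k - 1) * U k s) / lam k
        \<le> b\<^sup>2 / lam k * S k s powr lam k" if k: "k \<in> Ks" for k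
      unfolding S_def T_def U_def using a[OF k] v lam[OF k] lam_pos[OF k]
      by (intro exp_sum_powr_second_derivative_le) auto
    then have "G'' s \<le> (\<Sum>k\<in>Ks. b\<^sup>2 / lam k * S k s powr lam k)"
      unfolding G''_def by (rule sum_mono)
    also have "\<dots> \<le> (\<Sum>k\<in>Ks. b\<^sup>2 / l * S k s powr lam k)"
      using l lam lam_pos by (intro sum_mono mult_right_mono divide_left_mono) (auto intro: mult_pos_pos)
    finally show ?thesis
      by (simp add: G_def sum_distrib_left)
  qed
  ultimately have "ln (G 1) \<le> ln (G 0) + G' 0 / G 0 * 1 + b\<^sup>2 / l / 2 * 1\<^sup>2"
    by (intro ln_second_order_le G_pos)
  then show ?thesis
    by (simp add: G'_def T_def)
qed

lemma sum_powr_le_powr_sum: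
  fixes a :: "'a \<Rightarrow> real"
  assumes I: "finite I" and a: "\<And>i. i \<in> I \<Longrightarrow> 0 \<le> a i" and p: "1 \<le> p"
  shows "(\<Sum>i\<in>I. a i powr p) \<le> (\<Sum>i\<in>I. a i) powr p"
proof -
  let ?s = "\<Sum>i\<in>I. a i"
  have "(\<Sum>i\<in>I. a i powr p) = (\<Sum>i\<in>I. a i * a i powr (p - 1))"
    using a powr_add[of _ 1 "p - 1"] by (intro sum.cong) auto
  also have "\<dots> \<le> (\<Sum>i\<in>I. a i * ?s powr (p - 1))"
    using I a p by (intro sum_mono mult_left_mono powr_mono2 member_le_sum) auto
  also have "\<dots> = ?s powr p"
    using a powr_add[of ?s 1 "p - 1"] by (simp add: sum_distrib_right sum_nonneg)
  finally show ?thesis .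
qed

lemma balanced_learning_rate:
  fixes L C T B :: real
  assumes "0 < L" "0 < C" "0 < T" "0 < B"
  shows "sqrt (C * T * B\<^sup>2 / (2 * L)) * L + C * T * B\<^sup>2 / (2 * sqrt (C * T * B\<^sup>2 / (2 * L)))
    = B * sqrt (2 * L * C * T)"
proof -
  define \<eta> where "\<eta> = sqrt (C * T * B\<^sup>2 / (2 * L))"
  have "0 < \<eta>" and \<eta>_sq: "\<eta>\<^sup>2 = C * T * B\<^sup>2 / (2 * L)"
    using assms by (simp_all add: \<eta>_def)
  have "C * T * B\<^sup>2 = 2 * L * \<eta>\<^sup>2"
    unfolding \<eta>_sq using assms by simp
  then have "C * T * B\<^sup>2 / (2 * \<eta>) = \<eta> * L"
    using \<open>0 < \<eta>\<close> by (simp add: field_simps power2_eq_square)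
  moreover have "2 * L * \<eta> = B * sqrt (2 * L * C * T)"
  proof (rule power2_eq_imp_eq)
    show "(2 * L * \<eta>)\<^sup>2 = (B * sqrt (2 * L * C * T))\<^sup>2"
      unfolding power_mult_distrib \<eta>_sq using assms by (simp add: field_simps power2_eq_square)
  qed (use assms \<open>0 < \<eta>\<close> in auto)
  ultimately show ?thesis
    unfolding \<eta>_def[symmetric] by simp
qed

lemma gnl_choice_altdef:
  "gnl_choice N K \<alpha> lam \<eta> \<theta> j =
     (\<Sum>k=1..K. nest_sum N \<alpha> lam \<eta> \<theta> k powr (lam k - 1) * (\<alpha> j k * exp (\<theta> j / \<eta>)) powr (1 / lam k))
     / gnl_G N K \<alpha> lam (\<lambda>i. exp (\<theta> i / \<eta>))"
proof -
  let ?S = "nest_sum N \<alpha> lam \<eta> \<theta>"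
  let ?G = "gnl_G N K \<alpha> lam (\<lambda>i. exp (\<theta> i / \<eta>))"
  have G: "?G = (\<Sum>l=1..K. ?S l powr lam l)"
    by (simp add: gnl_G_def nest_sum_def)
  have "nest_prob N K \<alpha> lam \<eta> \<theta> k * cond_prob N \<alpha> lam \<eta> \<theta> j k
      = ?S k powr (lam k - 1) * (\<alpha> j k * exp (\<theta> j / \<eta>)) powr (1 / lam k) / ?G" for k
  proof -
    have powr_div: "?S k powr lam k / ?S k = ?S k powr (lam k - 1)"
      using powr_add[of "?S k" "lam k - 1" 1]
      by (cases "?S k = 0") (auto simp: nest_sum_def sum_nonneg)
    have "nest_prob N K \<alpha> lam \<eta> \<theta> k * cond_prob N \<alpha> lam \<eta> \<theta> j k
        = ?S k powr lam k / ?S k * (\<alpha> j k * exp (\<theta> j / \<eta>)) powr (1 / lam k) / ?G"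
      by (simp add: nest_prob_def cond_prob_def G)
    then show ?thesis
      by (simp only: powr_div)
  qed
  then show ?thesis
    unfolding gnl_choice_def sum_divide_distrib by simp
qed

lemma regret_zero_payoffs:
  assumes "1 \<le> N" and "\<And>t i. t \<in> {1..T} \<Longrightarrow> i \<in> {1..N} \<Longrightarrow> u t i = 0"
  shows "regret N T u x = 0"
proof -
  have "simplex N \<noteq> {}"
    using assms(1) by (auto simp: simplex_def intro!: exI[of _ "\<lambda>i. if i = 1 then 1 else 0"])
  then show ?thesis
    using assms(2) by (simp add: regret_def cum_payoff_def)
qed

locale gnl_model =
  fixes N K :: nat and \<alpha> :: "nat \<Rightarrow> nat \<Rightarrow> real" and lam :: "nat \<Rightarrow> real"
  assumes N_pos: "1 \<le> N"
    and lam_pos: "\<And>k. k \<in> {1..K} \<Longrightarrow> 0 < lam k"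
    and lam_le_one: "\<And>k. k \<in> {1..K} \<Longrightarrow> lam k \<le> 1"
    and alpha_nonneg: "\<And>i k. i \<in> {1..N} \<Longrightarrow> k \<in> {1..K} \<Longrightarrow> 0 \<le> \<alpha> i k"
    and alpha_sum: "\<And>i. i \<in> {1..N} \<Longrightarrow> (\<Sum>k=1..K. \<alpha> i k) = 1"
begin

lemma gnl_G_ge:
  assumes j: "j \<in> {1..N}" and y: "0 \<le> y j"
  shows "y j \<le> gnl_G N K \<alpha> lam y"
proof -
  have "y j = (\<Sum>k=1..K. \<alpha> j k * y j)"
    using alpha_sum[OF j] by (simp add: sum_distrib_right[symmetric])
  also have "\<dots> \<le> gnl_G N K \<alpha> lam y"
    unfolding gnl_G_def
  proof (rule sum_mono)
    fix k assume k: "k \<in> {1..K}"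
    have "\<alpha> j k * y j = ((\<alpha> j k * y j) powr (1 / lam k)) powr lam k"
      using alpha_nonneg[OF j k] y lam_pos[OF k] by (simp add: powr_powr)
    also have "\<dots> \<le> (\<Sum>i=1..N. (\<alpha> i k * y i) powr (1 / lam k)) powr lam k"
      using j lam_pos[OF k] by (intro powr_mono2 member_le_sum) auto
    finally show "\<alpha> j k * y j \<le> (\<Sum>i=1..N. (\<alpha> i k * y i) powr (1 / lam k)) powr lam k" .
  qed
  finally show ?thesis .
qed

lemma gnl_G_le_sum:
  assumes y: "\<And>i. i \<in> {1..N} \<Longrightarrow> 0 \<le> y i"
  shows "gnl_G N K \<alpha> lam y \<le> (\<Sum>i=1..N. y i)"
proof -
  have "gnl_G N K \<alpha> lam y \<le> (\<Sum>k=1..K. \<Sum>i=1..N. \<alpha> i k * y i)"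
    unfolding gnl_G_def
  proof (rule sum_mono)
    fix k assume k: "k \<in> {1..K}"
    have nonneg: "0 \<le> \<alpha> i k * y i" if "i \<in> {1..N}" for i
      using alpha_nonneg[OF that k] y[OF that] by simp
    have "(\<Sum>i=1..N. (\<alpha> i k * y i) powr (1 / lam k)) powr lam k
        \<le> ((\<Sum>i=1..N. \<alpha> i k * y i) powr (1 / lam k)) powr lam k"
      using nonneg lam_pos[OF k] lam_le_one[OF k]
      by (intro powr_mono2 sum_powr_le_powr_sum) (auto intro: sum_nonneg)
    also have "\<dots> = (\<Sum>i=1..N. \<alpha> i k * y i)"
      using sum_nonneg[of "{1..N}", OF nonneg] lam_pos[OF k] by (simp add: powr_powr)
    finally show "(\<Sum>i=1..N. (\<alpha> i k * y i) powr (1 / lam k)) powr lam k \<le> (\<Sum>i=1..N. \<alpha> i k * y i)" .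
  qed
  also have "\<dots> = (\<Sum>i=1..N. y i * (\<Sum>k=1..K. \<alpha> i k))"
    by (subst sum.swap) (simp add: sum_distrib_left mult.commute)
  also have "\<dots> = (\<Sum>i=1..N. y i)"
    using alpha_sum by simp
  finally show ?thesis .
qed

definition potential :: "real \<Rightarrow> (nat \<Rightarrow> real) \<Rightarrow> real" where
  "potential \<eta> \<theta> = \<eta> * ln (gnl_G N K \<alpha> lam (\<lambda>i. exp (\<theta> i / \<eta>)))"

lemma gnl_G_exp_pos: "0 < gnl_G N K \<alpha> lam (\<lambda>i. exp (\<theta> i / \<eta>))"
  using gnl_G_ge[of 1 "\<lambda>i. exp (\<theta> i / \<eta>)"] N_pos by (simp add: less_le_trans[OF exp_gt_zero])

lemma potential_ge:
  assumes \<eta>: "0 < \<eta>" and j: "j \<in> {1..N}"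
  shows "\<theta> j \<le> potential \<eta> \<theta>"
proof -
  have "\<theta> j / \<eta> \<le> ln (gnl_G N K \<alpha> lam (\<lambda>i. exp (\<theta> i / \<eta>)))"
    using gnl_G_ge[OF j, of "\<lambda>i. exp (\<theta> i / \<eta>)"] gnl_G_exp_pos
    by (subst ln_ge_iff) auto
  then show ?thesis
    unfolding potential_def using \<eta> by (simp add: divide_le_eq mult.commute)
qed

lemma potential_zero_le:
  assumes \<eta>: "0 < \<eta>"
  shows "potential \<eta> (\<lambda>_. 0) \<le> \<eta> * ln (real N)"
  unfolding potential_def using \<eta> gnl_G_le_sum[of "\<lambda>_. 1"] gnl_G_exp_pos[of "\<lambda>_. 0"]
  by (intro mult_left_mono) auto

lemma potential_step:
  fixes \<theta> w :: "nat \<Rightarrow> real" and \<eta> l B :: real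
  assumes \<eta>: "0 < \<eta>" and l: "0 < l" "\<And>k. k \<in> {1..K} \<Longrightarrow> l \<le> lam k"
    and w: "\<And>i. i \<in> {1..N} \<Longrightarrow> \<bar>w i\<bar> \<le> B"
  shows "potential \<eta> (\<lambda>i. \<theta> i + w i)
    \<le> potential \<eta> \<theta> + (\<Sum>j=1..N. w j * gnl_choice N K \<alpha> lam \<eta> \<theta> j) + B\<^sup>2 / (2 * \<eta> * l)"
proof -
  define a where "a k i = (\<alpha> i k * exp (\<theta> i / \<eta>)) powr (1 / lam k)" for k i
  define v where "v i = w i / \<eta>" for i
  define S where "S k s = (\<Sum>i=1..N. a k i * exp (s * v i / lam k))" for k s
  define G where "G s = (\<Sum>k=1..K. S k s powr lam k)" for s
  have G_segment: "gnl_G N K \<alpha> lam (\<lambda>i. exp ((\<theta> i + s * w i) / \<eta>)) = G s" for s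
  proof -
    have "(\<alpha> i k * exp ((\<theta> i + s * w i) / \<eta>)) powr (1 / lam k) = a k i * exp (s * v i / lam k)"
      if "i \<in> {1..N}" "k \<in> {1..K}" for i k
      using alpha_nonneg[OF that]
      by (simp add: a_def v_def add_divide_distrib exp_add powr_mult exp_powr_real mult_ac)
    then show ?thesis
      unfolding G_def gnl_G_def S_def by (intro sum.cong refl arg_cong2[where f = "(powr)"]) auto
  qed
  have G_pos: "0 < G s" for s
    using gnl_G_exp_pos[of "\<lambda>i. \<theta> i + s * w i" \<eta>] by (simp add: G_segment)
  let ?grad = "\<Sum>k=1..K. S k 0 powr (lam k - 1) * (\<Sum>i=1..N. a k i * v i)"
  have "\<bar>v i\<bar> \<le> B / \<eta>" if "i \<in> {1..N}" for i
    using w[OF that] \<eta> by (simp add: v_def abs_divide divide_right_mono)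
  then have "ln (G 1) \<le> ln (G 0) + ?grad / G 0 + (B / \<eta>)\<^sup>2 / (2 * l)"
    unfolding G_def S_def using l lam_le_one G_pos
    by (intro ln_sum_powr_exp_sum_le) (auto simp: a_def G_def S_def)
  then have "\<eta> * ln (G 1) \<le> \<eta> * (ln (G 0) + ?grad / G 0 + (B / \<eta>)\<^sup>2 / (2 * l))"
    using \<eta> by (intro mult_left_mono) auto
  also have "\<dots> = \<eta> * ln (G 0) + \<eta> * ?grad / G 0 + B\<^sup>2 / (2 * \<eta> * l)"
    using \<eta> by (simp add: field_simps power2_eq_square)
  finally have "\<eta> * ln (G 1) \<le> \<eta> * ln (G 0) + \<eta> * ?grad / G 0 + B\<^sup>2 / (2 * \<eta> * l)" .
  moreover have "\<eta> * ?grad / G 0 = (\<Sum>j=1..N. w j * gnl_choice N K \<alpha> lam \<eta> \<theta> j)"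
  proof -
    have "nest_sum N \<alpha> lam \<eta> \<theta> k = S k 0" for k
      by (simp add: nest_sum_def S_def a_def)
    then have "(\<Sum>j=1..N. w j * gnl_choice N K \<alpha> lam \<eta> \<theta> j)
        = (\<Sum>j=1..N. \<Sum>k=1..K. w j * S k 0 powr (lam k - 1) * a k j) / G 0"
      using G_segment[of 0]
      by (simp add: gnl_choice_altdef a_def sum_distrib_left sum_divide_distrib mult_ac)
    also have "\<dots> = \<eta> * ?grad / G 0"
      using \<eta> by (subst sum.swap) (simp add: v_def sum_distrib_left mult_ac)
    finally show ?thesis ..
  qed
  ultimately show ?thesis
    using G_segment[of 0] G_segment[of 1] by (simp add: potential_def)
qed

lemma gnl_ssa_regret_le:
  fixes u :: "nat \<Rightarrow> nat \<Rightarrow> real" and \<eta> l B :: real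
  assumes \<eta>: "0 < \<eta>" and l: "0 < l" "\<And>k. k \<in> {1..K} \<Longrightarrow> l \<le> lam k"
    and u: "\<And>t i. t \<in> {1..T} \<Longrightarrow> i \<in> {1..N} \<Longrightarrow> \<bar>u t i\<bar> \<le> B"
  shows "regret N T u (gnl_ssa N K \<alpha> lam \<eta> u) \<le> \<eta> * ln (real N) + real T * B\<^sup>2 / (2 * \<eta> * l)"
proof -
  let ?x = "gnl_ssa N K \<alpha> lam \<eta> u"
  let ?\<theta> = "cum_payoff u"
  have round_bound: "potential \<eta> (?\<theta> (Suc t)) - potential \<eta> (?\<theta> t)
      \<le> (\<Sum>i=1..N. u (Suc t) i * ?x (Suc t) i) + B\<^sup>2 / (2 * \<eta> * l)" if "t < T" for t
  proof -
    have "?\<theta> (Suc t) = (\<lambda>i. ?\<theta> t i + u (Suc t) i)"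
      by (simp add: cum_payoff_def fun_eq_iff)
    moreover have "?x (Suc t) = gnl_choice N K \<alpha> lam \<eta> (?\<theta> t)"
      by (simp add: gnl_ssa_def fun_eq_iff)
    ultimately show ?thesis
      using potential_step[OF \<eta> l, of "u (Suc t)" B "?\<theta> t"] u that
      by (simp add: mult.commute)
  qed
  then have "(\<Sum>t<T. potential \<eta> (?\<theta> (Suc t)) - potential \<eta> (?\<theta> t))
      \<le> (\<Sum>t<T. (\<Sum>i=1..N. u (Suc t) i * ?x (Suc t) i) + B\<^sup>2 / (2 * \<eta> * l))"
    by (intro sum_mono) simp
  then have "potential \<eta> (?\<theta> T) - potential \<eta> (?\<theta> 0)
      \<le> (\<Sum>t<T. (\<Sum>i=1..N. u (Suc t) i * ?x (Suc t) i) + B\<^sup>2 / (2 * \<eta> * l))"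
    by (simp only: sum_lessThan_telescope[of "\<lambda>t. potential \<eta> (?\<theta> t)"])
  also have "\<dots> = (\<Sum>t=1..T. \<Sum>i=1..N. u t i * ?x t i) + real T * B\<^sup>2 / (2 * \<eta> * l)"
    by (simp add: sum.distrib sum.atLeast1_atMost_eq)
  finally have telescoped: "potential \<eta> (?\<theta> T) - potential \<eta> (?\<theta> 0)
      \<le> (\<Sum>t=1..T. \<Sum>i=1..N. u t i * ?x t i) + real T * B\<^sup>2 / (2 * \<eta> * l)" .
  have "?\<theta> 0 = (\<lambda>_. 0)"
    by (simp add: cum_payoff_def fun_eq_iff)
  with telescoped potential_zero_le[OF \<eta>] have potential_T: "potential \<eta> (?\<theta> T)
      \<le> \<eta> * ln (real N) + (\<Sum>t=1..T. \<Sum>i=1..N. u t i * ?x t i) + real T * B\<^sup>2 / (2 * \<eta> * l)"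
    by simp
  have "(SUP y\<in>simplex N. \<Sum>i=1..N. ?\<theta> T i * y i) \<le> potential \<eta> (?\<theta> T)"
  proof (rule cSUP_least)
    show "simplex N \<noteq> {}"
      using N_pos by (auto simp: simplex_def intro!: exI[of _ "\<lambda>i. if i = 1 then 1 else 0"])
    fix y assume y: "y \<in> simplex N"
    have "(\<Sum>i=1..N. ?\<theta> T i * y i) \<le> (\<Sum>i=1..N. potential \<eta> (?\<theta> T) * y i)"
      using y potential_ge[OF \<eta>] by (intro sum_mono mult_right_mono) (auto simp: simplex_def)
    also have "\<dots> = potential \<eta> (?\<theta> T)"
      using y by (simp add: simplex_def sum_distrib_left[symmetric])
    finally show "(\<Sum>i=1..N. ?\<theta> T i * y i) \<le> potential \<eta> (?\<theta> T)" .
  qed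
  with potential_T show ?thesis
    by (simp add: regret_def)
qed

lemma gnl_ssa_regret_tuned_le:
  fixes u :: "nat \<Rightarrow> nat \<Rightarrow> real" and l C B \<eta> :: real
  assumes N: "2 \<le> N" and T: "1 \<le> T"
    and l: "0 < l" "\<And>k. k \<in> {1..K} \<Longrightarrow> l \<le> lam k" and C: "1 / l \<le> C"
    and u: "\<And>t i. t \<in> {1..T} \<Longrightarrow> i \<in> {1..N} \<Longrightarrow> \<bar>u t i\<bar> \<le> B"
    and \<eta>: "\<eta> = sqrt (C * real T * B\<^sup>2 / (2 * ln (real N)))"
  shows "regret N T u (gnl_ssa N K \<alpha> lam \<eta> u) \<le> B * sqrt (2 * ln (real N) * C * real T)"
proof -
  have "0 < C" "0 < ln (real N)"
    using less_le_trans[OF _ C] l N by simp_all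
  have "\<bar>u 1 1\<bar> \<le> B"
    using u N T by simp
  then consider "B = 0" | "0 < B"
    by linarith
  then show ?thesis
  proof cases
    case 1
    then have "regret N T u (gnl_ssa N K \<alpha> lam \<eta> u) = 0"
      using u N by (intro regret_zero_payoffs) auto
    with 1 show ?thesis
      by simp
  next
    case 2
    then have "0 < \<eta>"
      using \<eta> \<open>0 < C\<close> \<open>0 < ln (real N)\<close> T by simp
    have "regret N T u (gnl_ssa N K \<alpha> lam \<eta> u)
        \<le> \<eta> * ln (real N) + 1 / l * (real T * B\<^sup>2 / (2 * \<eta>))"
      using gnl_ssa_regret_le[OF \<open>0 < \<eta>\<close> l u] by (simp add: mult.commute)
    also have "\<dots> \<le> \<eta> * ln (real N) + C * real T * B\<^sup>2 / (2 * \<eta>)"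
      using mult_right_mono[OF C, of "real T * B\<^sup>2 / (2 * \<eta>)"] \<open>0 < \<eta>\<close> by simp
    also have "\<dots> = B * sqrt (2 * ln (real N) * C * real T)"
      unfolding \<eta> using \<open>0 < C\<close> \<open>0 < ln (real N)\<close> T 2 by (intro balanced_learning_rate) auto
    finally show ?thesis .
  qed
qed

end

theorem proposition2:
  fixes N K T :: nat
    and \<alpha> :: "nat \<Rightarrow> nat \<Rightarrow> real" and lam :: "nat \<Rightarrow> real"
    and u :: "nat \<Rightarrow> nat \<Rightarrow> real" and umax \<eta> :: real
  assumes N: "N \<ge> 2"
    and K: "K \<ge> 1"
    and lam: "\<forall>k\<in>{1..K}. 0 < lam k \<and> lam k \<le> 1"
    and alpha_nn: "\<forall>i\<in>{1..N}. \<forall>k\<in>{1..K}. 0 \<le> \<alpha> i k"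
    and alpha_sum: "\<forall>i\<in>{1..N}. (\<Sum>k=1..K. \<alpha> i k) = 1"
    and T: "T \<ge> 1"
    and u_bd: "\<forall>t\<in>{1..T}. \<forall>i\<in>{1..N}. \<bar>u t i\<bar> \<le> umax"
    and eta: "\<eta> = sqrt ((2 / Min (lam ` {1..K}) - 1) * real T * umax\<^sup>2 / (2 * ln (real N)))"
  shows "regret N T u (gnl_ssa N K \<alpha> lam \<eta> u)
           \<le> umax * sqrt (2 * ln (real N) * (2 / Min (lam ` {1..K}) - 1) * real T)"
proof -
  interpret gnl_model N K \<alpha> lam
    using N lam alpha_nn alpha_sum by unfold_locales auto
  define lmin where "lmin = Min (lam ` {1..K})"
  have "lmin \<in> lam ` {1..K}"
    unfolding lmin_def using K by (intro Min_in) auto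
  then have "0 < lmin" "lmin \<le> 1"
    using lam by auto
  \<comment> \<open>The smoothness argument yields the sharper constant 1 / lmin.\<close>
  then have "1 / lmin \<le> 2 / lmin - 1"
    by (simp add: field_simps)
  then show ?thesis
    using N T u_bd eta \<open>0 < lmin\<close>
    by (intro gnl_ssa_regret_tuned_le) (auto simp: lmin_def)
qed

end
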